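(* Let $n, l_z, l_c \ge 1$ be integers, let $\alpha>0$ and $\beta_d>0$ be constants, and let the following signals be defined on $[0,\infty)$: $e:[0,\infty)\to\mathbb{R}^n$ continuously differentiable; $\delta_3:[0,\infty)\to\mathbb{R}^n$ and $D:[0,\infty)\to\mathbb{R}^n$ twice continuously differentiable; for $j=1,\dots,l_z$, $\tilde z_j:[0,\infty)\to\mathbb{R}$ and $w_j:[0,\infty)\to\mathbb{R}^n$ continuously differentiable, and $\Lambda_j:[0,\infty)\to\mathbb{R}^{l_c}$, $v:[0,\infty)\to\mathbb{R}^{l_c}$, $\tilde w_j:[0,\infty)\to\mathbb{R}^n$ continuous. Define $s(t)\triangleq \dot e(t)+\alpha e(t)$, $$M_1(t)\triangleq\sum_{j=1}^{l_z}\tilde z_j(t)\,w_j(t),\qquad M_2(t)\triangleq\sum_{j=1}^{l_z}\big(\Lambda_j(t)^T v(t)\big)\,\tilde w_j(t).$$ Assume there are positive constants $\dot{\bar\delta}_3,\ddot{\bar\delta}_3,c_{d_1},c_{d_2},c_{M_1},c_{\dot M_1},c_{M_2}$ such that for all $t\ge0$: $\|\dot\delta_3(t)\|_1<\dot{\bar\delta}_3$, $\|\ddot\delta_3(t)\|_1<\ddot{\bar\delta}_3$, $\|\dot D(t)\|\le c_{d_1}$, $\|\ddot D(t)\|\le c_{d_2}$, $\|M_1(t)\|_1<c_{M_1}$, $\|\dot M_1(t)\|_1<c_{\dot M_1}$, $\|M_2(t)\|_1<c_{M_2}$. Define the scalar signal $\Omega$ by $$\Omega(t)=\Omega(0)+\int_0^t\Big[-s(\tau)^T\big(\dot\delta_3(\tau)+\dot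 D(\tau)-\beta_d\,\mathrm{sgn}(e(\tau))\big)-M_1(\tau)^T\dot e(\tau)-M_2(\tau)^Te(\tau)\Big]d\tau,$$ with $$\Omega(0)=\beta_d\|e(0)\|_1-e(0)^T\big(\dot\delta_3(0)+\dot D(0)+M_1(0)\big).$$ If $$\beta_d\ \ge\ \dot{\bar\delta}_3+c_{d_1}+c_{M_1}+\frac{1}{\alpha}\big(\ddot{\bar\delta}_3+c_{d_2}+c_{\dot M_1}+c_{M_2}\big),$$ then $\Omega(t)\ge0$ for all $t\ge0$.
   Context: $\|\cdot\|$ denotes the Euclidean norm and $\|\cdot\|_1$ the $\ell_1$ norm on $\mathbb{R}^n$; $\mathrm{sgn}(\cdot)$ is the standard sign function applied componentwise (with $\mathrm{sgn}(0)=0$). In the paper's application, $e$ is a filtered tracking error, $\delta_3$ is the estimation error of a steady-state control term, $D(t)=g^{-1}(\bar x(t))d(t)$ is the input-transformed disturbance, $\tilde z_j$ and $\tilde w_j$ are parameter estimation errors of an adaptor network, and $v$ are critic weights; for the lemma only the stated regularity and bounds are used. *)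

theory Defs
  imports "HOL-Analysis.Analysis"
begin

definition l1norm :: "real ^ 'n \<Rightarrow> real" where
  "l1norm x = (\<Sum>i\<in>UNIV. \<bar>x $ i\<bar>)"

text \<open>componentwise sign function, sgn 0 = 0\<close>
definition vsgn :: "real ^ 'n \<Rightarrow> real ^ 'n" where
  "vsgn x = (\<chi> i. sgn (x $ i))"

end

theory Submission
  imports Defs
begin

text \<open>With N = \<delta>3' + D' + M1, integrating -e'\<bullet>N by parts and using the chain rule
  \<integral> e'\<bullet>sgn e = |e(t)|_1 - |e(0)|_1 rewrites \<Omega>(t) as
  \<beta>d |e(t)|_1 - e(t)\<bullet>N(t) plus the integral of e\<bullet>N' - \<alpha> e\<bullet>(\<delta>3' + D') + \<alpha> \<beta>d |e|_1 - M2\<bullet>e.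
  Both parts are nonnegative by the Hoelder bound |x\<bullet>y| \<le> |x|_1 max_i |y_i| and the gain
  condition.\<close>

lemma l1norm_nonneg: "0 \<le> l1norm x"
  unfolding l1norm_def by (simp add: sum_nonneg)

lemma component_le_l1norm: "\<bar>x $ i\<bar> \<le> l1norm x"
  unfolding l1norm_def by (rule member_le_sum) auto

lemma inner_vsgn_self: "x \<bullet> vsgn x = l1norm x"
  by (simp add: inner_vec_def vsgn_def l1norm_def abs_sgn mult.commute)

lemma abs_inner_le_l1norm_mult:
  fixes x y :: "real ^ 'n"
  assumes "\<And>i. \<bar>y $ i\<bar> \<le> B"
  shows "\<bar>x \<bullet> y\<bar> \<le> l1norm x * B"
proof -
  have "\<bar>x \<bullet> y\<bar> \<le> (\<Sum>i\<in>UNIV. \<bar>x $ i\<bar> * \<bar>y $ i\<bar>)"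
    unfolding inner_vec_def inner_real_def abs_mult[symmetric] by (rule sum_abs)
  also have "\<dots> \<le> (\<Sum>i\<in>UNIV. \<bar>x $ i\<bar> * B)"
    by (intro sum_mono mult_left_mono assms) auto
  finally show ?thesis by (simp add: l1norm_def sum_distrib_right)
qed

lemma vector_derivative_within_atLeast:
  fixes f :: "real \<Rightarrow> 'a::real_normed_vector"
  assumes "(f has_vector_derivative f') (at x within {a..})" "a \<le> x"
  shows "vector_derivative f (at x within {a..}) = f'"
proof (rule vector_derivative_within[OF _ assms(1)])
  have "at_right x \<le> at x within {a..}"
    using assms(2) by (intro at_le) auto
  then show "at x within {a..} \<noteq> bot"
    using trivial_limit_at_right_real[of x] by (metis bot.extremum_uniqueI)
qed

lemma has_real_derivative_sqrt_sq_add: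
  fixes f :: "real \<Rightarrow> real"
  assumes "(f has_real_derivative f') (at x within S)" "\<epsilon> \<noteq> 0"
  shows "((\<lambda>x. sqrt ((f x)\<^sup>2 + \<epsilon>\<^sup>2)) has_real_derivative
      f' * (f x / sqrt ((f x)\<^sup>2 + \<epsilon>\<^sup>2))) (at x within S)"
proof -
  have "0 < (f x)\<^sup>2 + \<epsilon>\<^sup>2"
    using assms(2) by (simp add: add_nonneg_pos)
  moreover have "((\<lambda>x. (f x)\<^sup>2 + \<epsilon>\<^sup>2) has_real_derivative 2 * f x * f') (at x within S)"
    by (auto intro!: derivative_eq_intros assms(1))
  ultimately show ?thesis
    by (rule DERIV_cong[OF DERIV_chain2[OF DERIV_real_sqrt]]) (simp add: field_simps)
qed

lemma tendsto_divide_sqrt_sgn: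
  fixes x :: real
  assumes "(\<epsilon> \<longlongrightarrow> 0) F"
  shows "((\<lambda>k. x / sqrt (x\<^sup>2 + (\<epsilon> k)\<^sup>2)) \<longlongrightarrow> sgn x) F"
proof -
  have "((\<lambda>k. x / sqrt (x\<^sup>2 + (\<epsilon> k)\<^sup>2)) \<longlongrightarrow> x / sqrt (x\<^sup>2 + 0\<^sup>2)) F"
    if "x \<noteq> 0" using that by (intro tendsto_intros assms) auto
  then show ?thesis by (cases "x = 0") (auto simp: sgn_if)
qed

text \<open>The identity holds for each smoothing sqrt (f^2 + \<epsilon>^2) of abs \<circ> f by the fundamental
  theorem of calculus; dominated convergence with majorant abs \<circ> f' passes to the limit \<epsilon> \<rightarrow> 0.\<close>

lemma has_integral_deriv_mult_sgn:
  fixes f f' :: "real \<Rightarrow> real"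
  assumes "a \<le> b"
    and f_d: "\<And>x. x \<in> {a..b} \<Longrightarrow> (f has_real_derivative f' x) (at x within {a..b})"
    and f'_c: "continuous_on {a..b} f'"
  shows "((\<lambda>x. f' x * sgn (f x)) has_integral \<bar>f b\<bar> - \<bar>f a\<bar>) {a..b}"
proof -
  define \<epsilon> where "\<epsilon> k = inverse (real (Suc k))" for k
  have \<epsilon>_lim: "\<epsilon> \<longlonglongrightarrow> 0"
    unfolding \<epsilon>_def by (rule LIMSEQ_inverse_real_of_nat)
  have smoothed: "((\<lambda>x. f' x * (f x / sqrt ((f x)\<^sup>2 + (\<epsilon> k)\<^sup>2))) has_integral
      sqrt ((f b)\<^sup>2 + (\<epsilon> k)\<^sup>2) - sqrt ((f a)\<^sup>2 + (\<epsilon> k)\<^sup>2)) {a..b}" for k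
    using has_real_derivative_sqrt_sq_add[OF f_d, of _ "\<epsilon> k"]
    by (intro fundamental_theorem_of_calculus \<open>a \<le> b\<close>)
       (simp add: \<epsilon>_def has_real_derivative_iff_has_vector_derivative)
  show ?thesis
  proof (rule has_integral_dominated_convergence[OF smoothed])
    show "(\<lambda>x. \<bar>f' x\<bar>) integrable_on {a..b}"
      by (intro integrable_continuous_interval continuous_intros f'_c)
    show "\<forall>x\<in>{a..b}. norm (f' x * (f x / sqrt ((f x)\<^sup>2 + (\<epsilon> k)\<^sup>2))) \<le> \<bar>f' x\<bar>" for k
    proof
      fix x
      have "\<bar>f x\<bar> \<le> sqrt ((f x)\<^sup>2 + (\<epsilon> k)\<^sup>2)"
        by (intro real_le_rsqrt) simp
      then have "\<bar>f x / sqrt ((f x)\<^sup>2 + (\<epsilon> k)\<^sup>2)\<bar> \<le> 1"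
        by (cases "f x = 0") (auto simp: abs_divide divide_le_eq_1 add_pos_nonneg)
      from mult_left_le[OF this, of "\<bar>f' x\<bar>"]
      show "norm (f' x * (f x / sqrt ((f x)\<^sup>2 + (\<epsilon> k)\<^sup>2))) \<le> \<bar>f' x\<bar>"
        by (simp add: abs_mult)
    qed
    show "\<forall>x\<in>{a..b}. (\<lambda>k. f' x * (f x / sqrt ((f x)\<^sup>2 + (\<epsilon> k)\<^sup>2))) \<longlonglongrightarrow> f' x * sgn (f x)"
      by (intro ballI tendsto_mult_left tendsto_divide_sqrt_sgn \<epsilon>_lim)
    have "(\<lambda>k. sqrt ((f b)\<^sup>2 + (\<epsilon> k)\<^sup>2) - sqrt ((f a)\<^sup>2 + (\<epsilon> k)\<^sup>2))
        \<longlonglongrightarrow> sqrt ((f b)\<^sup>2 + 0\<^sup>2) - sqrt ((f a)\<^sup>2 + 0\<^sup>2)"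
      by (intro tendsto_intros \<epsilon>_lim)
    then show "(\<lambda>k. sqrt ((f b)\<^sup>2 + (\<epsilon> k)\<^sup>2) - sqrt ((f a)\<^sup>2 + (\<epsilon> k)\<^sup>2))
        \<longlonglongrightarrow> \<bar>f b\<bar> - \<bar>f a\<bar>"
      by simp
  qed
qed

lemma has_integral_inner_deriv_vsgn:
  fixes e e' :: "real \<Rightarrow> real ^ 'n"
  assumes "a \<le> b"
    and e_d: "\<And>x. x \<in> {a..b} \<Longrightarrow> (e has_vector_derivative e' x) (at x within {a..b})"
    and e'_c: "continuous_on {a..b} e'"
  shows "((\<lambda>x. e' x \<bullet> vsgn (e x)) has_integral l1norm (e b) - l1norm (e a)) {a..b}"
proof -
  have "((\<lambda>x. e' x $ i * sgn (e x $ i)) has_integral \<bar>e b $ i\<bar> - \<bar>e a $ i\<bar>) {a..b}" for i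
  proof (rule has_integral_deriv_mult_sgn[OF \<open>a \<le> b\<close>])
    show "((\<lambda>x. e x $ i) has_real_derivative e' x $ i) (at x within {a..b})"
      if "x \<in> {a..b}" for x
      using bounded_linear.has_vector_derivative[OF bounded_linear_vec_nth e_d[OF that]]
      by (simp add: has_real_derivative_iff_has_vector_derivative)
    show "continuous_on {a..b} (\<lambda>x. e' x $ i)"
      by (intro continuous_intros e'_c)
  qed
  then have "((\<lambda>x. \<Sum>i\<in>UNIV. e' x $ i * sgn (e x $ i)) has_integral
      (\<Sum>i\<in>UNIV. \<bar>e b $ i\<bar> - \<bar>e a $ i\<bar>)) {a..b}"
    by (intro has_integral_sum) auto
  then show ?thesis
    by (simp add: inner_vec_def vsgn_def l1norm_def sum_subtractf)
qed

lemma has_integral_sign_feedback: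
  fixes e e' P Q N' R :: "real \<Rightarrow> real ^ 'n" and \<alpha> \<beta> t I :: real
  assumes "0 \<le> t"
    and e_d: "\<And>\<tau>. \<tau> \<in> {0..t} \<Longrightarrow> (e has_vector_derivative e' \<tau>) (at \<tau> within {0..t})"
    and N_d: "\<And>\<tau>. \<tau> \<in> {0..t} \<Longrightarrow>
      ((\<lambda>\<tau>. P \<tau> + Q \<tau>) has_vector_derivative N' \<tau>) (at \<tau> within {0..t})"
    and e'_c: "continuous_on {0..t} e'"
    and G_int: "((\<lambda>\<tau>. e \<tau> \<bullet> N' \<tau> - \<alpha> * (e \<tau> \<bullet> P \<tau>) + \<alpha> * \<beta> * l1norm (e \<tau>) - R \<tau> \<bullet> e \<tau>)
      has_integral I) {0..t}"
  shows "((\<lambda>\<tau>. - ((e' \<tau> + \<alpha> *\<^sub>R e \<tau>) \<bullet> (P \<tau> - \<beta> *\<^sub>R vsgn (e \<tau>))) - Q \<tau> \<bullet> e' \<tau> - R \<tau> \<bullet> e \<tau>)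
      has_integral (\<beta> * l1norm (e t) - e t \<bullet> (P t + Q t))
        - (\<beta> * l1norm (e 0) - e 0 \<bullet> (P 0 + Q 0)) + I) {0..t}"
proof -
  have by_parts: "((\<lambda>\<tau>. e \<tau> \<bullet> N' \<tau> + e' \<tau> \<bullet> (P \<tau> + Q \<tau>)) has_integral
      e t \<bullet> (P t + Q t) - e 0 \<bullet> (P 0 + Q 0)) {0..t}"
  proof (rule fundamental_theorem_of_calculus[OF \<open>0 \<le> t\<close>])
    fix \<tau> assume "\<tau> \<in> {0..t}"
    from bounded_bilinear.has_vector_derivative[OF bounded_bilinear_inner e_d[OF this] N_d[OF this]]
    show "((\<lambda>\<tau>. e \<tau> \<bullet> (P \<tau> + Q \<tau>)) has_vector_derivative
        e \<tau> \<bullet> N' \<tau> + e' \<tau> \<bullet> (P \<tau> + Q \<tau>)) (at \<tau> within {0..t})" .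
  qed
  have sign_part: "((\<lambda>\<tau>. \<beta> * (e' \<tau> \<bullet> vsgn (e \<tau>))) has_integral
      \<beta> * (l1norm (e t) - l1norm (e 0))) {0..t}"
    by (intro has_integral_mult_right has_integral_inner_deriv_vsgn \<open>0 \<le> t\<close> e_d e'_c)
  have "(\<lambda>\<tau>. - ((e' \<tau> + \<alpha> *\<^sub>R e \<tau>) \<bullet> (P \<tau> - \<beta> *\<^sub>R vsgn (e \<tau>))) - Q \<tau> \<bullet> e' \<tau> - R \<tau> \<bullet> e \<tau>)
    = (\<lambda>\<tau>. \<beta> * (e' \<tau> \<bullet> vsgn (e \<tau>)) - (e \<tau> \<bullet> N' \<tau> + e' \<tau> \<bullet> (P \<tau> + Q \<tau>))
        + (e \<tau> \<bullet> N' \<tau> - \<alpha> * (e \<tau> \<bullet> P \<tau>) + \<alpha> * \<beta> * l1norm (e \<tau>) - R \<tau> \<bullet> e \<tau>))"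
    by (simp add: fun_eq_iff inner_vsgn_self inner_add_left inner_add_right inner_diff_right
        inner_commute algebra_simps)
  moreover have "((\<lambda>\<tau>. \<beta> * (e' \<tau> \<bullet> vsgn (e \<tau>)) - (e \<tau> \<bullet> N' \<tau> + e' \<tau> \<bullet> (P \<tau> + Q \<tau>))
        + (e \<tau> \<bullet> N' \<tau> - \<alpha> * (e \<tau> \<bullet> P \<tau>) + \<alpha> * \<beta> * l1norm (e \<tau>) - R \<tau> \<bullet> e \<tau>))
      has_integral \<beta> * (l1norm (e t) - l1norm (e 0)) - (e t \<bullet> (P t + Q t) - e 0 \<bullet> (P 0 + Q 0)) + I)
      {0..t}"
    by (intro has_integral_add has_integral_diff sign_part by_parts G_int)
  ultimately show ?thesis
    by (simp add: algebra_simps)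
qed

lemma sign_feedback_integrand_nonneg:
  fixes x P N' R :: "real ^ 'n"
  assumes "\<And>i. \<bar>P $ i\<bar> \<le> p" "\<And>i. \<bar>N' $ i\<bar> \<le> c" "\<And>i. \<bar>R $ i\<bar> \<le> r"
    and "0 \<le> \<alpha>" "\<alpha> * p + c + r \<le> \<alpha> * \<beta>"
  shows "0 \<le> x \<bullet> N' - \<alpha> * (x \<bullet> P) + \<alpha> * \<beta> * l1norm x - R \<bullet> x"
proof -
  have "\<bar>x \<bullet> N'\<bar> \<le> l1norm x * c" "\<bar>x \<bullet> P\<bar> \<le> l1norm x * p" "\<bar>x \<bullet> R\<bar> \<le> l1norm x * r"
    by (intro abs_inner_le_l1norm_mult assms)+
  moreover have "\<alpha> * (x \<bullet> P) \<le> \<alpha> * (l1norm x * p)"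
    using \<open>0 \<le> \<alpha>\<close> \<open>\<bar>x \<bullet> P\<bar> \<le> l1norm x * p\<close> by (intro mult_left_mono) auto
  moreover have "l1norm x * (\<alpha> * p + c + r) \<le> l1norm x * (\<alpha> * \<beta>)"
    by (intro mult_left_mono assms l1norm_nonneg)
  ultimately show ?thesis
    by (simp add: inner_commute algebra_simps)
qed

lemma sign_feedback_integral_nonneg:
  fixes e e' P Q N' R :: "real \<Rightarrow> real ^ 'n" and \<alpha> \<beta> t p q c r :: real
  assumes e_d: "\<And>\<tau>. 0 \<le> \<tau> \<Longrightarrow> (e has_vector_derivative e' \<tau>) (at \<tau> within {0..})"
    and N_d: "\<And>\<tau>. 0 \<le> \<tau> \<Longrightarrow>
      ((\<lambda>\<tau>. P \<tau> + Q \<tau>) has_vector_derivative N' \<tau>) (at \<tau> within {0..})"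
    and e'_c: "continuous_on {0..} e'" and N'_c: "continuous_on {0..} N'"
    and P_c: "continuous_on {0..} P" and R_c: "continuous_on {0..} R"
    and P_b: "\<And>\<tau> i. 0 \<le> \<tau> \<Longrightarrow> \<bar>P \<tau> $ i\<bar> \<le> p"
    and Q_b: "\<And>\<tau> i. 0 \<le> \<tau> \<Longrightarrow> \<bar>Q \<tau> $ i\<bar> \<le> q"
    and N'_b: "\<And>\<tau> i. 0 \<le> \<tau> \<Longrightarrow> \<bar>N' \<tau> $ i\<bar> \<le> c"
    and R_b: "\<And>\<tau> i. 0 \<le> \<tau> \<Longrightarrow> \<bar>R \<tau> $ i\<bar> \<le> r"
    and "0 < \<alpha>" and gain: "p + q + 1 / \<alpha> * (c + r) \<le> \<beta>"
    and "0 \<le> t"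
  shows "0 \<le> \<beta> * l1norm (e 0) - e 0 \<bullet> (P 0 + Q 0) + integral {0..t} (\<lambda>\<tau>.
      - ((e' \<tau> + \<alpha> *\<^sub>R e \<tau>) \<bullet> (P \<tau> - \<beta> *\<^sub>R vsgn (e \<tau>))) - Q \<tau> \<bullet> e' \<tau> - R \<tau> \<bullet> e \<tau>)"
proof -
  have "0 \<le> q" "0 \<le> c" "0 \<le> r"
    using order_trans[OF abs_ge_zero Q_b[of 0]] order_trans[OF abs_ge_zero N'_b[of 0]]
      order_trans[OF abs_ge_zero R_b[of 0]] by auto
  have "\<alpha> * (p + q + 1 / \<alpha> * (c + r)) \<le> \<alpha> * \<beta>"
    using gain \<open>0 < \<alpha>\<close> by (intro mult_left_mono) auto
  moreover have "\<alpha> * (p + q + 1 / \<alpha> * (c + r)) = \<alpha> * p + \<alpha> * q + c + r"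
    using \<open>0 < \<alpha>\<close> by (simp add: field_simps)
  moreover have "0 \<le> \<alpha> * q" "0 \<le> 1 / \<alpha> * (c + r)"
    using \<open>0 < \<alpha>\<close> \<open>0 \<le> q\<close> \<open>0 \<le> c\<close> \<open>0 \<le> r\<close> by simp_all
  ultimately have gain_p_q: "p + q \<le> \<beta>" and gain_\<alpha>: "\<alpha> * p + c + r \<le> \<alpha> * \<beta>"
    using gain by linarith+
  have sub: "{0..t} \<subseteq> {0..}"
    by auto
  let ?G = "\<lambda>\<tau>. e \<tau> \<bullet> N' \<tau> - \<alpha> * (e \<tau> \<bullet> P \<tau>) + \<alpha> * \<beta> * l1norm (e \<tau>) - R \<tau> \<bullet> e \<tau>"
  have "continuous_on {0..} e"
    using e_d by (intro continuous_on_vector_derivative) auto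
  then have "?G integrable_on {0..t}"
    unfolding l1norm_def
    by (intro integrable_continuous_interval continuous_on_subset[OF _ sub] continuous_intros N'_c P_c R_c)
  then obtain I where G_int: "(?G has_integral I) {0..t}"
    by (auto simp: integrable_on_def)
  have "0 \<le> I"
    using \<open>0 < \<alpha>\<close> gain_\<alpha>
    by (intro has_integral_nonneg[OF G_int] sign_feedback_integrand_nonneg) (auto intro: P_b N'_b R_b)
  have "\<bar>(P t + Q t) $ i\<bar> \<le> p + q" for i
    using abs_triangle_ineq[of "P t $ i" "Q t $ i"] P_b[of t i] Q_b[of t i] \<open>0 \<le> t\<close> by simp
  then have "\<bar>e t \<bullet> (P t + Q t)\<bar> \<le> l1norm (e t) * (p + q)"
    by (rule abs_inner_le_l1norm_mult)
  also have "\<dots> \<le> \<beta> * l1norm (e t)"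
    using mult_left_mono[OF gain_p_q l1norm_nonneg] by (simp add: mult.commute)
  finally have "0 \<le> \<beta> * l1norm (e t) - e t \<bullet> (P t + Q t)"
    by linarith
  moreover have "((\<lambda>\<tau>. - ((e' \<tau> + \<alpha> *\<^sub>R e \<tau>) \<bullet> (P \<tau> - \<beta> *\<^sub>R vsgn (e \<tau>))) - Q \<tau> \<bullet> e' \<tau> - R \<tau> \<bullet> e \<tau>)
      has_integral (\<beta> * l1norm (e t) - e t \<bullet> (P t + Q t))
        - (\<beta> * l1norm (e 0) - e 0 \<bullet> (P 0 + Q 0)) + I) {0..t}"
    using \<open>0 \<le> t\<close> _ _ continuous_on_subset[OF e'_c sub] G_int
  proof (rule has_integral_sign_feedback)
    show "(e has_vector_derivative e' \<tau>) (at \<tau> within {0..t})"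
      and "((\<lambda>\<tau>. P \<tau> + Q \<tau>) has_vector_derivative N' \<tau>) (at \<tau> within {0..t})"
      if "\<tau> \<in> {0..t}" for \<tau>
      using e_d N_d that by (auto intro: has_vector_derivative_within_subset[OF _ sub])
  qed
  ultimately show ?thesis
    using \<open>0 \<le> I\<close> by (simp add: integral_unique)
qed

theorem lemma1:
  fixes lz :: nat
    and \<alpha> \<beta>d :: real
    and e e' \<delta>3 \<delta>3' \<delta>3'' D D' D'' :: "real \<Rightarrow> real ^ 'n"
    and z z' :: "nat \<Rightarrow> real \<Rightarrow> real"
    and w w' wt :: "nat \<Rightarrow> real \<Rightarrow> real ^ 'n"
    and \<Lambda> :: "nat \<Rightarrow> real \<Rightarrow> real ^ 'c"
    and v :: "real \<Rightarrow> real ^ 'c"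
    and M1 M2 :: "real \<Rightarrow> real ^ 'n"
    and d3b d3bb cd1 cd2 cM1 cdM1 cM2 :: real
  assumes lz: "lz \<ge> 1"
    and \<alpha>: "\<alpha> > 0" and \<beta>d: "\<beta>d > 0"
    and e_d: "\<And>t. t \<ge> 0 \<Longrightarrow> (e has_vector_derivative e' t) (at t within {0..})"
    and e'_c: "continuous_on {0..} e'"
    and d3_d: "\<And>t. t \<ge> 0 \<Longrightarrow> (\<delta>3 has_vector_derivative \<delta>3' t) (at t within {0..})"
    and d3'_d: "\<And>t. t \<ge> 0 \<Longrightarrow> (\<delta>3' has_vector_derivative \<delta>3'' t) (at t within {0..})"
    and d3''_c: "continuous_on {0..} \<delta>3''"
    and D_d: "\<And>t. t \<ge> 0 \<Longrightarrow> (D has_vector_derivative D' t) (at t within {0..})"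
    and D'_d: "\<And>t. t \<ge> 0 \<Longrightarrow> (D' has_vector_derivative D'' t) (at t within {0..})"
    and D''_c: "continuous_on {0..} D''"
    and z_d: "\<And>j t. j \<in> {1..lz} \<Longrightarrow> t \<ge> 0 \<Longrightarrow> (z j has_real_derivative z' j t) (at t within {0..})"
    and z'_c: "\<And>j. j \<in> {1..lz} \<Longrightarrow> continuous_on {0..} (z' j)"
    and w_d: "\<And>j t. j \<in> {1..lz} \<Longrightarrow> t \<ge> 0 \<Longrightarrow> (w j has_vector_derivative w' j t) (at t within {0..})"
    and w'_c: "\<And>j. j \<in> {1..lz} \<Longrightarrow> continuous_on {0..} (w' j)"
    and \<Lambda>_c: "\<And>j. j \<in> {1..lz} \<Longrightarrow> continuous_on {0..} (\<Lambda> j)"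
    and v_c: "continuous_on {0..} v"
    and wt_c: "\<And>j. j \<in> {1..lz} \<Longrightarrow> continuous_on {0..} (wt j)"
    and M1_def: "M1 = (\<lambda>t. \<Sum>j=1..lz. z j t *\<^sub>R w j t)"
    and M2_def: "M2 = (\<lambda>t. \<Sum>j=1..lz. (\<Lambda> j t \<bullet> v t) *\<^sub>R wt j t)"
    and pos: "d3b > 0" "d3bb > 0" "cd1 > 0" "cd2 > 0" "cM1 > 0" "cdM1 > 0" "cM2 > 0"
    and b_d3': "\<And>t. t \<ge> 0 \<Longrightarrow> l1norm (\<delta>3' t) < d3b"
    and b_d3'': "\<And>t. t \<ge> 0 \<Longrightarrow> l1norm (\<delta>3'' t) < d3bb"
    and b_D': "\<And>t. t \<ge> 0 \<Longrightarrow> norm (D' t) \<le> cd1"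
    and b_D'': "\<And>t. t \<ge> 0 \<Longrightarrow> norm (D'' t) \<le> cd2"
    and b_M1: "\<And>t. t \<ge> 0 \<Longrightarrow> l1norm (M1 t) < cM1"
    and b_M1': "\<And>t. t \<ge> 0 \<Longrightarrow> l1norm (vector_derivative M1 (at t within {0..})) < cdM1"
    and b_M2: "\<And>t. t \<ge> 0 \<Longrightarrow> l1norm (M2 t) < cM2"
    and gain: "\<beta>d \<ge> d3b + cd1 + cM1 + (1 / \<alpha>) * (d3bb + cd2 + cdM1 + cM2)"
  shows "\<forall>t\<ge>0.
    (\<beta>d * l1norm (e 0) - e 0 \<bullet> (\<delta>3' 0 + D' 0 + M1 0))
    + integral {0..t} (\<lambda>\<tau>.
        - ((e' \<tau> + \<alpha> *\<^sub>R e \<tau>) \<bullet> (\<delta>3' \<tau> + D' \<tau> - \<beta>d *\<^sub>R vsgn (e \<tau>)))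
        - M1 \<tau> \<bullet> e' \<tau> - M2 \<tau> \<bullet> e \<tau>) \<ge> 0"
proof (intro allI impI)
  fix t :: real assume "0 \<le> t"
  define M1' where "M1' \<tau> = (\<Sum>j=1..lz. z j \<tau> *\<^sub>R w' j \<tau> + z' j \<tau> *\<^sub>R w j \<tau>)" for \<tau>
  have M1_d: "(M1 has_vector_derivative M1' \<tau>) (at \<tau> within {0..})" if "0 \<le> \<tau>" for \<tau>
    unfolding M1_def M1'_def using z_d w_d that
    by (intro has_vector_derivative_sum has_vector_derivative_scaleR)
       (auto simp: has_real_derivative_iff_has_vector_derivative)
  have z_c: "continuous_on {0..} (z j)" if "j \<in> {1..lz}" for j
    by (rule DERIV_continuous_on) (use z_d that in auto)
  have w_c: "continuous_on {0..} (w j)" if "j \<in> {1..lz}" for j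
    by (rule continuous_on_vector_derivative) (use w_d that in auto)
  have d3'_c: "continuous_on {0..} \<delta>3'" and D'_c: "continuous_on {0..} D'"
    using d3'_d D'_d by (auto intro: continuous_on_vector_derivative)
  show "0 \<le> \<beta>d * l1norm (e 0) - e 0 \<bullet> (\<delta>3' 0 + D' 0 + M1 0) + integral {0..t} (\<lambda>\<tau>.
      - ((e' \<tau> + \<alpha> *\<^sub>R e \<tau>) \<bullet> (\<delta>3' \<tau> + D' \<tau> - \<beta>d *\<^sub>R vsgn (e \<tau>))) - M1 \<tau> \<bullet> e' \<tau> - M2 \<tau> \<bullet> e \<tau>)"
  proof (rule sign_feedback_integral_nonneg[where N' = "\<lambda>\<tau>. \<delta>3'' \<tau> + D'' \<tau> + M1' \<tau>"
        and p = "d3b + cd1" and q = cM1 and c = "d3bb + cd2 + cdM1" and r = cM2])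
    fix \<tau> :: real and i assume "0 \<le> \<tau>"
    show "((\<lambda>\<tau>. \<delta>3' \<tau> + D' \<tau> + M1 \<tau>) has_vector_derivative \<delta>3'' \<tau> + D'' \<tau> + M1' \<tau>)
        (at \<tau> within {0..})"
      using \<open>0 \<le> \<tau>\<close> by (intro has_vector_derivative_add d3'_d D'_d M1_d)
    show "\<bar>(\<delta>3' \<tau> + D' \<tau>) $ i\<bar> \<le> d3b + cd1"
      using abs_triangle_ineq[of "\<delta>3' \<tau> $ i" "D' \<tau> $ i"] component_le_l1norm[of "\<delta>3' \<tau>" i]
        component_le_norm_cart[of "D' \<tau>" i] b_d3'[OF \<open>0 \<le> \<tau>\<close>] b_D'[OF \<open>0 \<le> \<tau>\<close>] by simp
    show "\<bar>M1 \<tau> $ i\<bar> \<le> cM1"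
      using component_le_l1norm[of "M1 \<tau>" i] b_M1[OF \<open>0 \<le> \<tau>\<close>] by simp
    show "\<bar>(\<delta>3'' \<tau> + D'' \<tau> + M1' \<tau>) $ i\<bar> \<le> d3bb + cd2 + cdM1"
      using abs_triangle_ineq[of "\<delta>3'' \<tau> $ i + D'' \<tau> $ i" "M1' \<tau> $ i"]
        abs_triangle_ineq[of "\<delta>3'' \<tau> $ i" "D'' \<tau> $ i"] component_le_l1norm[of "\<delta>3'' \<tau>" i]
        component_le_norm_cart[of "D'' \<tau>" i] component_le_l1norm[of "M1' \<tau>" i]
        b_d3''[OF \<open>0 \<le> \<tau>\<close>] b_D''[OF \<open>0 \<le> \<tau>\<close>] b_M1'[OF \<open>0 \<le> \<tau>\<close>]
        vector_derivative_within_atLeast[OF M1_d[OF \<open>0 \<le> \<tau>\<close>] \<open>0 \<le> \<tau>\<close>] by simp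
    show "\<bar>M2 \<tau> $ i\<bar> \<le> cM2"
      using component_le_l1norm[of "M2 \<tau>" i] b_M2[OF \<open>0 \<le> \<tau>\<close>] by simp
  next
    show "continuous_on {0..} (\<lambda>\<tau>. \<delta>3'' \<tau> + D'' \<tau> + M1' \<tau>)"
      unfolding M1'_def by (intro continuous_intros d3''_c D''_c z_c w_c z'_c w'_c)
    show "continuous_on {0..} M2"
      unfolding M2_def by (auto intro!: continuous_intros \<Lambda>_c v_c wt_c)
  qed (use e_d e'_c d3'_c D'_c \<open>0 \<le> t\<close> \<alpha> gain in \<open>auto intro: continuous_intros\<close>)
qed

end
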